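(* Every closed admissible conic class contains a minimal (with respect to inclusion) closed admissible conic class.
   Context: Standing setting: $(X,\|\cdot\|)$ is a separable infinite-dimensional Banach space and $d$ is a translation-invariant stable pseudometric on $X$ such that $\mathrm{Id}\colon(X,\|\cdot\|)\to(X,d)$ is a coarse equivalence, with $\omega_{\mathrm{Id}}(t)=\sup\{d(x,y):\|x-y\|\le t\}$. $\Delta$ is a countable $\|\cdot\|$-dense $\mathbb Q$-linear subspace; $\bar x(\lambda,y)=d(\lambda x,y)$; $\mathcal T$ is the pointwise closure of $\{\bar x:x\in\Delta\}$ in $\mathbb R^{\mathbb Q\times\Delta}$; defining sequences $(x_n)\subseteq\Delta$ satisfy $\bar x_n\to\sigma$. Dilation $\alpha\cdot\sigma=\lim_n\overline{\alpha x_n}$ ($\alpha\in\mathbb Q$); convolution $\sigma*\tau=\lim_n\lim_m\overline{x_n+y_m}$. Symmetric types: $\sigma=(-1)\cdot\sigma$; $\mathcal S$ their set. $\gamma=\inf_{t>0}\omega_{\mathrm{Id}}(t)$; $\sigma$ admissible if $\sigma(1,0)>\gamma$. A conic class is a nonempty $\mathcal C\subseteq\mathcal S$, $\mathcal C\ne\{\bar0\}$, closed under dilation by all $\lambda\in\mathbb Q$ and under convolution; admissible if it contains an admissible type; closed means closed in $\mathcal T$. *)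

theory Defs
  imports "HOL-Analysis.Analysis"
begin

definition infinite_dimensional :: "'a::real_normed_vector itself \<Rightarrow> bool" where
  "infinite_dimensional _ \<longleftrightarrow> \<not> (\<exists>B::'a set. finite B \<and> span B = UNIV)"

definition separable_nv :: "'a::real_normed_vector itself \<Rightarrow> bool" where
  "separable_nv _ \<longleftrightarrow> (\<exists>S::'a set. countable S \<and> closure S = UNIV)"

definition pseudometric :: "('a \<Rightarrow> 'a \<Rightarrow> real) \<Rightarrow> bool" where
  "pseudometric d \<longleftrightarrow> (\<forall>x. d x x = 0) \<and> (\<forall>x y. d x y = d y x)
     \<and> (\<forall>x y z. d x z \<le> d x y + d y z)"

definition translation_invariant :: "('a::ab_group_add \<Rightarrow> 'a \<Rightarrow> real) \<Rightarrow> bool" where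
  "translation_invariant d \<longleftrightarrow> (\<forall>x y z. d (x + z) (y + z) = d x y)"

definition stable_pm :: "('a \<Rightarrow> 'a \<Rightarrow> real) \<Rightarrow> bool" where
  "stable_pm d \<longleftrightarrow> (\<forall>xs ys :: nat \<Rightarrow> 'a. \<forall>a b :: nat \<Rightarrow> real. \<forall>L1 L2.
     (\<exists>z B. \<forall>n. d (xs n) z \<le> B \<and> d (ys n) z \<le> B)
     \<longrightarrow> (\<forall>n. (\<lambda>m. d (xs n) (ys m)) \<longlonglongrightarrow> a n) \<longrightarrow> a \<longlonglongrightarrow> L1
     \<longrightarrow> (\<forall>m. (\<lambda>n. d (xs n) (ys m)) \<longlonglongrightarrow> b m) \<longrightarrow> b \<longlonglongrightarrow> L2
     \<longrightarrow> L1 = L2)"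

definition coarse_equiv_id :: "('a::real_normed_vector \<Rightarrow> 'a \<Rightarrow> real) \<Rightarrow> bool" where
  "coarse_equiv_id d \<longleftrightarrow>
     (\<forall>t. \<exists>B. \<forall>x y. norm (x - y) \<le> t \<longrightarrow> d x y \<le> B)
   \<and> (\<forall>t. \<exists>B. \<forall>x y. d x y \<le> t \<longrightarrow> norm (x - y) \<le> B)"

definition omega_id :: "('a::real_normed_vector \<Rightarrow> 'a \<Rightarrow> real) \<Rightarrow> real \<Rightarrow> real" where
  "omega_id d t = Sup {d x y | x y. norm (x - y) \<le> t}"

definition gamma :: "('a::real_normed_vector \<Rightarrow> 'a \<Rightarrow> real) \<Rightarrow> real" where
  "gamma d = Inf (omega_id d ` {0<..})"

definition rat_dense_subspace :: "'a::real_normed_vector set \<Rightarrow> bool" where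
  "rat_dense_subspace \<Delta> \<longleftrightarrow> countable \<Delta> \<and> closure \<Delta> = UNIV \<and> 0 \<in> \<Delta>
     \<and> (\<forall>x\<in>\<Delta>. \<forall>y\<in>\<Delta>. x + y \<in> \<Delta>)
     \<and> (\<forall>q::rat. \<forall>x\<in>\<Delta>. of_rat q *\<^sub>R x \<in> \<Delta>)"

text \<open>Elements of R^(Q x Delta) are represented as functions rat \<times> 'a \<Rightarrow> real vanishing
 outside Q x Delta; the product (pointwise) topology is the library's topology on functions.\<close>
definition tbar :: "('a::real_normed_vector \<Rightarrow> 'a \<Rightarrow> real) \<Rightarrow> 'a set \<Rightarrow> 'a \<Rightarrow> (rat \<times> 'a \<Rightarrow> real)" where
  "tbar d \<Delta> x = (\<lambda>(q, y). if y \<in> \<Delta> then d (of_rat q *\<^sub>R x) y else 0)"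

definition types :: "('a::real_normed_vector \<Rightarrow> 'a \<Rightarrow> real) \<Rightarrow> 'a set \<Rightarrow> (rat \<times> 'a \<Rightarrow> real) set" where
  "types d \<Delta> = closure (tbar d \<Delta> ` \<Delta>)"

definition defining_seq :: "('a::real_normed_vector \<Rightarrow> 'a \<Rightarrow> real) \<Rightarrow> 'a set \<Rightarrow> (nat \<Rightarrow> 'a) \<Rightarrow> (rat \<times> 'a \<Rightarrow> real) \<Rightarrow> bool" where
  "defining_seq d \<Delta> xs \<sigma> \<longleftrightarrow> (\<forall>n. xs n \<in> \<Delta>) \<and> (\<lambda>n. tbar d \<Delta> (xs n)) \<longlonglongrightarrow> \<sigma>"

definition dil :: "('a::real_normed_vector \<Rightarrow> 'a \<Rightarrow> real) \<Rightarrow> 'a set \<Rightarrow> rat \<Rightarrow> (rat \<times> 'a \<Rightarrow> real) \<Rightarrow> (rat \<times> 'a \<Rightarrow> real)" where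
  "dil d \<Delta> \<alpha> \<sigma> = (THE \<tau>. \<forall>xs. defining_seq d \<Delta> xs \<sigma> \<longrightarrow>
      (\<lambda>n. tbar d \<Delta> (of_rat \<alpha> *\<^sub>R xs n)) \<longlonglongrightarrow> \<tau>)"

definition conv :: "('a::real_normed_vector \<Rightarrow> 'a \<Rightarrow> real) \<Rightarrow> 'a set \<Rightarrow> (rat \<times> 'a \<Rightarrow> real) \<Rightarrow> (rat \<times> 'a \<Rightarrow> real) \<Rightarrow> (rat \<times> 'a \<Rightarrow> real)" where
  "conv d \<Delta> \<sigma> \<tau> = (THE \<rho>. \<forall>xs ys. defining_seq d \<Delta> xs \<sigma> \<longrightarrow> defining_seq d \<Delta> ys \<tau> \<longrightarrow>
      (\<exists>\<rho>n. (\<forall>n. (\<lambda>m. tbar d \<Delta> (xs n + ys m)) \<longlonglongrightarrow> \<rho>n n) \<and> \<rho>n \<longlonglongrightarrow> \<rho>))"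

definition sym_types :: "('a::real_normed_vector \<Rightarrow> 'a \<Rightarrow> real) \<Rightarrow> 'a set \<Rightarrow> (rat \<times> 'a \<Rightarrow> real) set" where
  "sym_types d \<Delta> = {\<sigma> \<in> types d \<Delta>. \<sigma> = dil d \<Delta> (-1) \<sigma>}"

definition admissible_type :: "('a::real_normed_vector \<Rightarrow> 'a \<Rightarrow> real) \<Rightarrow> (rat \<times> 'a \<Rightarrow> real) \<Rightarrow> bool" where
  "admissible_type d \<sigma> \<longleftrightarrow> \<sigma> (1, 0) > gamma d"

definition conic_class :: "('a::real_normed_vector \<Rightarrow> 'a \<Rightarrow> real) \<Rightarrow> 'a set \<Rightarrow> (rat \<times> 'a \<Rightarrow> real) set \<Rightarrow> bool" where
  "conic_class d \<Delta> C \<longleftrightarrow> C \<noteq> {} \<and> C \<subseteq> sym_types d \<Delta> \<and> C \<noteq> {tbar d \<Delta> 0}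
     \<and> (\<forall>q::rat. \<forall>\<sigma>\<in>C. dil d \<Delta> q \<sigma> \<in> C)
     \<and> (\<forall>\<sigma>\<in>C. \<forall>\<tau>\<in>C. conv d \<Delta> \<sigma> \<tau> \<in> C)"

definition admissible_class :: "('a::real_normed_vector \<Rightarrow> 'a \<Rightarrow> real) \<Rightarrow> (rat \<times> 'a \<Rightarrow> real) set \<Rightarrow> bool" where
  "admissible_class d C \<longleftrightarrow> (\<exists>\<sigma>\<in>C. admissible_type d \<sigma>)"

definition closed_adm_conic :: "('a::real_normed_vector \<Rightarrow> 'a \<Rightarrow> real) \<Rightarrow> 'a set \<Rightarrow> (rat \<times> 'a \<Rightarrow> real) set \<Rightarrow> bool" where
  "closed_adm_conic d \<Delta> C \<longleftrightarrow> conic_class d \<Delta> C \<and> admissible_class d C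
     \<and> closedin (top_of_set (types d \<Delta>)) C"

end

theory Submission
  imports Defs
begin

text \<open>Zorn's lemma for reverse inclusion reduces the claim to chains: the intersection of a
  nonempty chain of closed admissible conic classes must again be one. Closedness and closure
  under dilation and convolution pass to intersections; the issue is admissibility. Dilating an
  admissible type moves its value at \<open>(1, 0)\<close> into the band \<open>[a, 2a]\<close> for any
  \<open>a > \<gamma>\<close>, and the band is compact in the product topology because a bound on
  \<open>\<sigma>(1, 0)\<close> bounds every coordinate of a type. So every member of the chain meets
  the band, and by compactness their intersection meets it in an admissible type.\<close>

lemma tendsto_fun_iff:
  fixes f :: "'b \<Rightarrow> 'i \<Rightarrow> real"
  shows "(f \<longlongrightarrow> l) F \<longleftrightarrow> (\<forall>i. ((\<lambda>c. f c i) \<longlongrightarrow> l i) F)"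
  using limitin_componentwise[of "\<lambda>_. euclidean" UNIV f l F]
  by (simp add: euclidean_product_topology flip: limitin_canonical_iff)

lemma closure_mem_if_locally_subset:
  assumes "open U" "closed S" "A \<inter> U \<subseteq> S" "x \<in> closure A" "x \<in> U"
  shows "x \<in> S"
proof -
  have "x \<in> closure (U \<inter> A)" using open_Int_closure_subset[OF assms(1)] assms(4,5) by blast
  also have "\<dots> \<subseteq> S" using assms(2,3) by (simp add: Int_commute closure_minimal)
  finally show ?thesis .
qed

text \<open>The product topology on \<open>'i \<Rightarrow> real\<close> is not first countable for uncountable
  \<open>'i\<close>, but closure points of a family supported on a countable set are still sequential
  limits. (\<open>undefined\<close> is inserted only to make the enumerated set nonempty.)\<close>
lemma closure_countable_support_LIMSEQ:
  fixes A :: "('i \<Rightarrow> real) set"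
  assumes \<sigma>: "\<sigma> \<in> closure A" and P: "countable P"
    and supp: "\<And>f i. f \<in> A \<Longrightarrow> i \<notin> P \<Longrightarrow> f i = 0"
  obtains f where "\<And>n. f n \<in> A" "f \<longlonglongrightarrow> \<sigma>"
proof -
  define e where "e = from_nat_into (insert undefined P)"
  have e_onto: "\<exists>k. e k = i" if "i \<in> P" for i
    using that from_nat_into_surj[of "insert undefined P" i] P unfolding e_def by blast
  define U where "U n = {g. \<forall>k\<in>{..n}. g (e k) \<in> ball (\<sigma> (e k)) (1 / (real n + 1))}" for n
  have "open (U n)" for n
    unfolding U_def
    using product_topology_basis'[of "{..n}" "\<lambda>k. ball (\<sigma> (e k)) (1 / (real n + 1))" e] by simp
  moreover have "\<sigma> \<in> U n" for n unfolding U_def by auto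
  ultimately have "\<forall>n. \<exists>g. g \<in> A \<and> g \<in> U n"
    using \<sigma> open_Int_closure_eq_empty by blast
  from choice[OF this] obtain f where f: "\<And>n. f n \<in> A" "\<And>n. f n \<in> U n" by blast
  have "(\<lambda>n. f n i) \<longlonglongrightarrow> \<sigma> i" for i
  proof (cases "i \<in> P")
    case True
    then obtain k where k: "e k = i" using e_onto by blast
    show ?thesis
    proof (rule LIMSEQ_I)
      fix r :: real assume "0 < r"
      then obtain m where m: "inverse (real (Suc m)) < r" using reals_Archimedean by blast
      show "\<exists>no. \<forall>n\<ge>no. norm (f n i - \<sigma> i) < r"
      proof (intro exI allI impI)
        fix n assume n: "max k m \<le> n"
        have "dist (f n i) (\<sigma> i) < 1 / (real n + 1)"
          using f(2)[of n] n k unfolding U_def by (auto simp: dist_commute)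
        also have "\<dots> \<le> inverse (real (Suc m))" using n by (simp add: divide_simps)
        finally show "norm (f n i - \<sigma> i) < r" using m by (simp add: dist_norm)
      qed
    qed
  next
    case False
    have "\<sigma> \<in> {g. g i = 0}"
      by (rule closure_mem_if_locally_subset[of UNIV _ A])
        (use \<sigma> supp False in \<open>auto intro!: closed_Collect_eq continuous_intros\<close>)
    then show ?thesis using supp[OF f(1) False] by simp
  qed
  then have "f \<longlonglongrightarrow> \<sigma>" by (simp add: tendsto_fun_iff)
  then show ?thesis using that f(1) by blast
qed

lemma Inter_Zorn:
  assumes "\<A> \<noteq> {}" and ch: "\<And>\<C>. \<C> \<noteq> {} \<Longrightarrow> subset.chain \<A> \<C> \<Longrightarrow> \<Inter>\<C> \<in> \<A>"
  shows "\<exists>M\<in>\<A>. \<forall>X\<in>\<A>. X \<subseteq> M \<longrightarrow> X = M"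
proof -
  have "\<exists>M\<in>uminus ` \<A>. \<forall>X\<in>uminus ` \<A>. M \<subseteq> X \<longrightarrow> X = M"
  proof (rule subset_Zorn_nonempty)
    show "uminus ` \<A> \<noteq> {}" using assms(1) by blast
    fix \<C> assume "\<C> \<noteq> {}" "subset.chain (uminus ` \<A>) \<C>"
    then have "uminus ` \<C> \<noteq> {}" "subset.chain \<A> (uminus ` \<C>)"
      by (auto simp: subset.chain_def)
    then have "- \<Union>\<C> \<in> \<A>" using ch[of "uminus ` \<C>"] by (simp add: uminus_Sup)
    then have "- (- \<Union>\<C>) \<in> uminus ` \<A>" by (rule imageI)
    then show "\<Union>\<C> \<in> uminus ` \<A>" by simp
  qed
  then obtain M where M: "M \<in> \<A>" "\<forall>X\<in>uminus ` \<A>. - M \<subseteq> X \<longrightarrow> X = - M" by blast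
  have "X = M" if "X \<in> \<A>" "X \<subseteq> M" for X
  proof -
    have "- X \<in> uminus ` \<A>" "- M \<subseteq> - X" using that by auto
    then have "- X = - M" using M(2) by blast
    then show ?thesis by simp
  qed
  then show ?thesis using M(1) by blast
qed

locale coarse_types_setting =
  fixes d :: "'a::real_normed_vector \<Rightarrow> 'a \<Rightarrow> real" and \<Delta> :: "'a set"
  assumes pseudometric: "pseudometric d" and translation_invariant: "translation_invariant d"
    and coarse_equiv: "coarse_equiv_id d" and dense_subspace: "rat_dense_subspace \<Delta>"
begin

lemma d_refl [simp]: "d x x = 0"
  using pseudometric by (simp add: pseudometric_def)

lemma d_sym: "d x y = d y x"
  using pseudometric by (simp add: pseudometric_def)

lemma d_triangle: "d x z \<le> d x y + d y z"
  using pseudometric by (simp add: pseudometric_def)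

lemma d_nonneg: "0 \<le> d x y"
  using d_triangle[of x x y] d_sym[of y x] d_refl[of x] by linarith

lemma d_translate: "d (x + z) (y + z) = d x y"
  using translation_invariant by (simp add: translation_invariant_def)

lemma d_double: "d (u + u) 0 \<le> 2 * d u 0"
proof -
  have "d (u + u) 0 \<le> d (u + u) u + d u 0" by (rule d_triangle)
  also have "d (u + u) u = d u 0" using d_translate[of u u 0] by simp
  finally show ?thesis by simp
qed

lemma zero_in_Delta: "0 \<in> \<Delta>"
  using dense_subspace by (simp add: rat_dense_subspace_def)

lemma countable_Delta: "countable \<Delta>"
  using dense_subspace by (simp add: rat_dense_subspace_def)

lemma coarse_upper: "\<exists>B. \<forall>x y. norm (x - y) \<le> t \<longrightarrow> d x y \<le> B"
  using coarse_equiv by (simp add: coarse_equiv_id_def)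

lemma coarse_lower: "\<exists>B. \<forall>x y. d x y \<le> t \<longrightarrow> norm (x - y) \<le> B"
  using coarse_equiv by (simp add: coarse_equiv_id_def)

lemma d_le_omega_id: "norm (x - y) \<le> t \<Longrightarrow> d x y \<le> omega_id d t"
proof -
  obtain B where "\<forall>x y. norm (x - y) \<le> t \<longrightarrow> d x y \<le> B" using coarse_upper by blast
  then have "bdd_above {d x y | x y. norm (x - y) \<le> t}" unfolding bdd_above_def by blast
  then show "norm (x - y) \<le> t \<Longrightarrow> d x y \<le> omega_id d t"
    unfolding omega_id_def by (auto intro: cSup_upper)
qed

lemma gamma_nonneg: "0 \<le> gamma d"
  unfolding gamma_def
proof (rule cInf_greatest)
  fix s assume "s \<in> omega_id d ` {0<..}"
  then obtain t where "t > 0" "s = omega_id d t" by blast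
  then show "0 \<le> s" using d_le_omega_id[of 0 0 t] by simp
qed simp

lemma gamma_lessE:
  assumes "gamma d < s"
  obtains t where "t > 0" "omega_id d t < s"
  using assms cInf_lessD[of "omega_id d ` {0<..}" s] unfolding gamma_def by auto

lemma tbar_Delta [simp]: "y \<in> \<Delta> \<Longrightarrow> tbar d \<Delta> x (q, y) = d (of_rat q *\<^sub>R x) y"
  by (simp add: tbar_def)

lemma tbar_at_origin [simp]: "tbar d \<Delta> x (q, 0) = d (of_rat q *\<^sub>R x) 0"
  by (simp add: zero_in_Delta)

lemma types_closed: "closed (types d \<Delta>)"
  by (simp add: types_def)

lemma defining_seq_exists:
  assumes "\<sigma> \<in> types d \<Delta>"
  obtains xs where "defining_seq d \<Delta> xs \<sigma>"
proof -
  have supp: "g i = 0" if "g \<in> tbar d \<Delta> ` \<Delta>" "i \<notin> UNIV \<times> \<Delta>" for g i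
    using that by (cases i) (auto simp: tbar_def)
  have countable: "countable (UNIV \<times> \<Delta> :: (rat \<times> 'a) set)" using countable_Delta by simp
  obtain f where f: "\<And>n. f n \<in> tbar d \<Delta> ` \<Delta>" "f \<longlonglongrightarrow> \<sigma>"
    using closure_countable_support_LIMSEQ[of \<sigma> "tbar d \<Delta> ` \<Delta>" "UNIV \<times> \<Delta>"]
      assms countable supp unfolding types_def by blast
  then have "\<forall>n. \<exists>x. x \<in> \<Delta> \<and> f n = tbar d \<Delta> x" by blast
  from choice[OF this] obtain xs where xs: "\<And>n. xs n \<in> \<Delta>" "\<And>n. f n = tbar d \<Delta> (xs n)"
    by blast
  have "f = (\<lambda>n. tbar d \<Delta> (xs n))" using xs(2) by (rule ext)
  then show thesis using that xs(1) f(2) unfolding defining_seq_def by blast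
qed

lemma dil_types:
  assumes \<sigma>: "\<sigma> \<in> types d \<Delta>"
  shows "dil d \<Delta> q \<sigma> = (\<lambda>(l, y). \<sigma> (l * q, y))"
proof -
  have tbar_scale: "tbar d \<Delta> (of_rat q *\<^sub>R x) = (\<lambda>(l, y). tbar d \<Delta> x (l * q, y))" for x
    by (auto simp: tbar_def of_rat_mult mult.commute)
  have conv: "(\<lambda>n. tbar d \<Delta> (of_rat q *\<^sub>R xs n)) \<longlonglongrightarrow> (\<lambda>(l, y). \<sigma> (l * q, y))"
    if "defining_seq d \<Delta> xs \<sigma>" for xs
  proof -
    have "\<And>i. (\<lambda>n. tbar d \<Delta> (xs n) i) \<longlonglongrightarrow> \<sigma> i"
      using that unfolding defining_seq_def tendsto_fun_iff by blast
    then show ?thesis unfolding tbar_scale tendsto_fun_iff split_beta by (intro allI)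
  qed
  obtain xs0 where xs0: "defining_seq d \<Delta> xs0 \<sigma>" using defining_seq_exists[OF \<sigma>] .
  show ?thesis unfolding dil_def
  proof (rule the_equality)
    fix \<tau>
    assume "\<forall>xs. defining_seq d \<Delta> xs \<sigma> \<longrightarrow> (\<lambda>n. tbar d \<Delta> (of_rat q *\<^sub>R xs n)) \<longlonglongrightarrow> \<tau>"
    then have lim: "(\<lambda>n. tbar d \<Delta> (of_rat q *\<^sub>R xs0 n)) \<longlonglongrightarrow> \<tau>" using xs0 by blast
    show "\<tau> = (\<lambda>(l, y). \<sigma> (l * q, y))"
    proof
      fix i
      have "(\<lambda>n. tbar d \<Delta> (of_rat q *\<^sub>R xs0 n) i) \<longlonglongrightarrow> \<tau> i"
        using lim unfolding tendsto_fun_iff by blast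
      moreover have "(\<lambda>n. tbar d \<Delta> (of_rat q *\<^sub>R xs0 n) i) \<longlonglongrightarrow> (\<lambda>(l, y). \<sigma> (l * q, y)) i"
        using conv[OF xs0] unfolding tendsto_fun_iff by blast
      ultimately show "\<tau> i = (\<lambda>(l, y). \<sigma> (l * q, y)) i" by (rule LIMSEQ_unique)
    qed
  qed (use conv in blast)
qed

lemma types_inherit_closed:
  assumes "\<sigma> \<in> types d \<Delta>" "open U" "\<sigma> \<in> U" "closed S"
    and "\<And>x. x \<in> \<Delta> \<Longrightarrow> tbar d \<Delta> x \<in> U \<Longrightarrow> tbar d \<Delta> x \<in> S"
  shows "\<sigma> \<in> S"
  by (rule closure_mem_if_locally_subset[of U S "tbar d \<Delta> ` \<Delta>"])
    (use assms in \<open>auto simp: types_def\<close>)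

lemma types_double_scale:
  assumes "\<sigma> \<in> types d \<Delta>"
  shows "\<sigma> (2 * q, 0) \<le> 2 * \<sigma> (q, 0)"
proof -
  have "\<sigma> \<in> {g. g (2 * q, 0) \<le> 2 * g (q, 0)}"
  proof (rule types_inherit_closed[OF assms open_UNIV UNIV_I])
    fix x :: 'a
    have two: "real_of_rat (2 * q) = real_of_rat q + real_of_rat q" by (simp add: of_rat_mult)
    have "of_rat (2 * q) *\<^sub>R x = of_rat q *\<^sub>R x + of_rat q *\<^sub>R x"
      unfolding two by (rule scaleR_add_left)
    then show "tbar d \<Delta> x \<in> {g. g (2 * q, 0) \<le> 2 * g (q, 0)}"
      using d_double[of "of_rat q *\<^sub>R x"] by simp
  qed (auto intro!: closed_Collect_le continuous_intros)
  then show ?thesis by simp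
qed

text \<open>A type exceeding \<open>\<gamma>\<close> at scale 1 is realized by vectors of norm at least some \<open>t > 0\<close>;
  since \<open>d\<close>-bounded sets are norm bounded, large multiples of them are \<open>d\<close>-far from 0.\<close>
lemma types_ge_at_large_scale:
  assumes \<sigma>: "\<sigma> \<in> types d \<Delta>" and \<gamma>: "gamma d < \<sigma> (1, 0)"
  obtains t B where "t > 0" "\<And>q. 0 < q \<Longrightarrow> B < real_of_rat q * t \<Longrightarrow> a \<le> \<sigma> (q, 0)"
proof -
  obtain t where t: "t > 0" "omega_id d t < \<sigma> (1, 0)" using gamma_lessE[OF \<gamma>] .
  obtain B where B: "\<And>u v. d u v \<le> a \<Longrightarrow> norm (u - v) \<le> B" using coarse_lower[of a] by blast
  have "a \<le> \<sigma> (q, 0)" if q: "0 < q" "B < real_of_rat q * t" for q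
  proof -
    have "\<sigma> \<in> {g. a \<le> g (q, 0)}"
    proof (rule types_inherit_closed[OF \<sigma>, of "{g. omega_id d t < g (1, 0)}"])
      fix x assume "tbar d \<Delta> x \<in> {g. omega_id d t < g (1, 0)}"
      then have "\<not> norm (x - 0) \<le> t" using d_le_omega_id[of x 0 t] by fastforce
      then have "real_of_rat q * t < real_of_rat q * norm x" using q(1) by simp
      then have "B < real_of_rat q * norm x" using q(2) by linarith
      then have "B < norm (real_of_rat q *\<^sub>R x - 0)" using q(1) by simp
      then have "\<not> d (real_of_rat q *\<^sub>R x) 0 \<le> a" using B by (meson not_le)
      then show "tbar d \<Delta> x \<in> {g. a \<le> g (q, 0)}" by simp
    qed (use t in \<open>auto intro!: open_Collect_less closed_Collect_le continuous_intros\<close>)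
    then show ?thesis by simp
  qed
  then show thesis using that t(1) by blast
qed

lemma types_le_at_small_scale:
  assumes \<sigma>: "\<sigma> \<in> types d \<Delta>"
  obtains B where "0 \<le> B" "\<And>q. \<bar>real_of_rat q\<bar> * B \<le> t \<Longrightarrow> \<sigma> (q, 0) \<le> omega_id d t"
proof -
  obtain B where B: "\<And>u v. d u v \<le> \<sigma> (1, 0) + 1 \<Longrightarrow> norm (u - v) \<le> B"
    using coarse_lower by blast
  have "\<sigma> (q, 0) \<le> omega_id d t" if q: "\<bar>real_of_rat q\<bar> * max B 0 \<le> t" for q
  proof -
    have "\<sigma> \<in> {g. g (q, 0) \<le> omega_id d t}"
    proof (rule types_inherit_closed[OF \<sigma>, of "{g. g (1, 0) < \<sigma> (1, 0) + 1}"])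
      fix x assume "tbar d \<Delta> x \<in> {g. g (1, 0) < \<sigma> (1, 0) + 1}"
      then have "d x 0 \<le> \<sigma> (1, 0) + 1" by simp
      then have "norm x \<le> max B 0" using B[of x 0] by simp
      then have "norm (real_of_rat q *\<^sub>R x - 0) \<le> t"
        using q mult_left_mono[of "norm x" "max B 0" "\<bar>real_of_rat q\<bar>"] by simp
      then show "tbar d \<Delta> x \<in> {g. g (q, 0) \<le> omega_id d t}"
        using d_le_omega_id by simp
    qed (auto intro!: open_Collect_less closed_Collect_le continuous_intros)
    then show ?thesis by simp
  qed
  then show thesis using that[of "max B 0"] by simp
qed

text \<open>Along the dyadic scales \<open>2^n / 2^j\<close> the values \<open>\<sigma>(2^n/2^j, 0)\<close> start below \<open>a\<close>,
  eventually reach \<open>a\<close>, and at most double from one scale to the next; the first scale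
  reaching \<open>a\<close> lands in \<open>[a, 2a]\<close>.\<close>
lemma types_rescale_into_band:
  assumes \<sigma>: "\<sigma> \<in> types d \<Delta>" and \<gamma>: "gamma d < \<sigma> (1, 0)" and a: "gamma d < a"
  obtains q where "a \<le> \<sigma> (q, 0)" "\<sigma> (q, 0) \<le> 2 * a"
proof -
  obtain t0 where t0: "t0 > 0" "omega_id d t0 < a" using gamma_lessE[OF a] .
  obtain B0 where B0: "0 \<le> B0" "\<And>q. \<bar>real_of_rat q\<bar> * B0 \<le> t0 \<Longrightarrow> \<sigma> (q, 0) \<le> omega_id d t0"
    using types_le_at_small_scale[OF \<sigma>, where t = t0] by blast
  obtain t B where tB: "t > 0" "\<And>q. 0 < q \<Longrightarrow> B < real_of_rat q * t \<Longrightarrow> a \<le> \<sigma> (q, 0)"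
    using types_ge_at_large_scale[OF \<sigma> \<gamma>, where a = a] by blast
  obtain j :: nat where j: "B0 / t0 < 2 ^ j" using real_arch_pow[of 2] by auto
  obtain N :: nat where N: "2 ^ j * B / t < 2 ^ N" using real_arch_pow[of 2] by auto
  define f where "f n = \<sigma> ((2::rat) ^ n / 2 ^ j, 0)" for n
  have "\<bar>real_of_rat (1 / 2 ^ j)\<bar> * B0 \<le> t0"
    using j t0(1) by (simp add: of_rat_divide of_rat_power divide_simps mult.commute)
  then have f0: "f 0 < a" using B0(2) t0(2) unfolding f_def by fastforce
  have "B < real_of_rat (2 ^ N / 2 ^ j) * t"
    using N tB(1) by (simp add: of_rat_divide of_rat_power divide_simps mult.commute)
  then have fN: "a \<le> f N" unfolding f_def by (intro tB(2)) auto
  define n where "n = (LEAST n. a \<le> f n)"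
  have fn: "a \<le> f n" unfolding n_def by (rule LeastI[of _ N]) (rule fN)
  have n0: "n \<noteq> 0" using fn f0 by (metis not_less)
  have fn1: "f (n - 1) < a"
    using not_less_Least[of "n - 1" "\<lambda>n. a \<le> f n"] n0 unfolding n_def[symmetric] by force
  have "(2::rat) ^ n / 2 ^ j = 2 * (2 ^ (n - 1) / 2 ^ j)" using n0 by (cases n) auto
  then have "f n \<le> 2 * f (n - 1)" unfolding f_def using types_double_scale[OF \<sigma>] by metis
  then show thesis using that fn fn1 unfolding f_def by fastforce
qed

lemma types_bounded_box:
  obtains M where "\<And>\<sigma> p. \<sigma> \<in> types d \<Delta> \<Longrightarrow> \<sigma> (1, 0) \<le> c \<Longrightarrow> 0 \<le> \<sigma> p \<and> \<sigma> p \<le> M p"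
proof -
  obtain B0 where B0: "\<And>u v. d u v \<le> c + 1 \<Longrightarrow> norm (u - v) \<le> B0" using coarse_lower by blast
  have "\<forall>l. \<exists>B. \<forall>u v. norm (u - v) \<le> \<bar>real_of_rat l\<bar> * B0 \<longrightarrow> d u v \<le> B"
    using coarse_upper by blast
  from choice[OF this] obtain Bf
    where Bf: "\<And>l u v. norm (u - v) \<le> \<bar>real_of_rat l\<bar> * B0 \<Longrightarrow> d u v \<le> Bf l"
    by blast
  define M where "M = (\<lambda>(l, y). \<bar>Bf l\<bar> + d 0 y)"
  have "\<sigma> \<in> {g. \<forall>p. 0 \<le> g p \<and> g p \<le> M p}" if \<sigma>: "\<sigma> \<in> types d \<Delta>" "\<sigma> (1, 0) \<le> c" for \<sigma>
  proof (rule types_inherit_closed[OF \<sigma>(1), of "{g. g (1, 0) < c + 1}"])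
    fix x assume "tbar d \<Delta> x \<in> {g. g (1, 0) < c + 1}"
    then have x: "norm x \<le> B0" using B0[of x 0] by simp
    have upper: "tbar d \<Delta> x (l, y) \<le> M (l, y)" for l y
    proof (cases "y \<in> \<Delta>")
      case True
      have "norm (real_of_rat l *\<^sub>R x - 0) \<le> \<bar>real_of_rat l\<bar> * B0"
        using x by (simp add: mult_left_mono)
      then have "d (real_of_rat l *\<^sub>R x) 0 \<le> \<bar>Bf l\<bar>" using Bf abs_ge_self order_trans by blast
      moreover have "d (real_of_rat l *\<^sub>R x) y \<le> d (real_of_rat l *\<^sub>R x) 0 + d 0 y"
        by (rule d_triangle)
      ultimately show ?thesis using True by (simp add: M_def)
    next
      case False
      then show ?thesis using d_nonneg[of 0 y] by (simp add: tbar_def M_def)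
    qed
    have lower: "0 \<le> tbar d \<Delta> x p" for p
      using d_nonneg by (simp add: tbar_def split: prod.split)
    show "tbar d \<Delta> x \<in> {g. \<forall>p. 0 \<le> g p \<and> g p \<le> M p}"
      using upper lower by (simp add: split_paired_All)
  next
    show "open {g::rat \<times> 'a \<Rightarrow> real. g (1, 0) < c + 1}"
      by (auto intro!: open_Collect_less continuous_intros)
    show "closed {g::rat \<times> 'a \<Rightarrow> real. \<forall>p. 0 \<le> g p \<and> g p \<le> M p}"
      by (auto intro!: closed_Collect_all closed_Collect_conj closed_Collect_le continuous_intros)
  qed (use \<sigma> in simp)
  then show thesis using that by blast
qed

text \<open>Tychonoff: the band lies in a product of compact intervals.\<close>
lemma compact_types_band: "compact (types d \<Delta> \<inter> {g. a \<le> g (1, 0) \<and> g (1, 0) \<le> c})"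
  (is "compact ?K")
proof -
  obtain M where M: "\<And>\<sigma> p. \<sigma> \<in> types d \<Delta> \<Longrightarrow> \<sigma> (1, 0) \<le> c \<Longrightarrow> 0 \<le> \<sigma> p \<and> \<sigma> p \<le> M p"
    using types_bounded_box[where c = c] by blast
  have "compactin (product_topology (\<lambda>_. euclidean) UNIV) (PiE UNIV (\<lambda>p. {0..M p}))"
    by (simp add: compactin_PiE)
  then have "compact (PiE UNIV (\<lambda>p. {0..M p}))" by (simp add: euclidean_product_topology)
  moreover have "closed ?K"
    using types_closed
    by (intro closed_Int closed_Collect_conj) (auto intro!: closed_Collect_le continuous_intros)
  ultimately have "compact (PiE UNIV (\<lambda>p. {0..M p}) \<inter> ?K)" by (rule compact_Int_closed)
  moreover have "PiE UNIV (\<lambda>p. {0..M p}) \<inter> ?K = ?K"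
    using M by (auto simp: PiE_iff)
  ultimately show ?thesis by simp
qed

lemma closed_adm_conic_subset_types: "closed_adm_conic d \<Delta> D \<Longrightarrow> D \<subseteq> types d \<Delta>"
  by (auto simp: closed_adm_conic_def conic_class_def sym_types_def)

lemma closed_adm_conic_closed: "closed_adm_conic d \<Delta> D \<Longrightarrow> closed D"
  using types_closed closedin_closed_trans unfolding closed_adm_conic_def by blast

lemma closed_adm_conic_dil: "closed_adm_conic d \<Delta> D \<Longrightarrow> \<sigma> \<in> D \<Longrightarrow> dil d \<Delta> q \<sigma> \<in> D"
  by (simp add: closed_adm_conic_def conic_class_def)

lemma closed_adm_conic_conv:
  "closed_adm_conic d \<Delta> D \<Longrightarrow> \<sigma> \<in> D \<Longrightarrow> \<tau> \<in> D \<Longrightarrow> conv d \<Delta> \<sigma> \<tau> \<in> D"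
  by (simp add: closed_adm_conic_def conic_class_def)

lemma closed_adm_conic_meets_band:
  assumes D: "closed_adm_conic d \<Delta> D" and a: "gamma d < a"
  obtains \<tau> where "\<tau> \<in> D" "a \<le> \<tau> (1, 0)" "\<tau> (1, 0) \<le> 2 * a"
proof -
  obtain \<sigma> where \<sigma>: "\<sigma> \<in> D" "gamma d < \<sigma> (1, 0)"
    using D unfolding closed_adm_conic_def admissible_class_def admissible_type_def by blast
  have \<sigma>_types: "\<sigma> \<in> types d \<Delta>" using closed_adm_conic_subset_types[OF D] \<sigma>(1) by blast
  obtain q where q: "a \<le> \<sigma> (q, 0)" "\<sigma> (q, 0) \<le> 2 * a"
    using types_rescale_into_band[OF \<sigma>_types \<sigma>(2) a] .
  have "dil d \<Delta> q \<sigma> (1, 0) = \<sigma> (q, 0)" by (simp add: dil_types[OF \<sigma>_types])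
  then show thesis using q by (intro that[OF closed_adm_conic_dil[OF D \<sigma>(1), of q]]) simp_all
qed

lemma closed_adm_conic_Inter:
  assumes ne: "\<C> \<noteq> {}" and \<C>: "\<And>D. D \<in> \<C> \<Longrightarrow> closed_adm_conic d \<Delta> D"
    and \<sigma>: "\<sigma> \<in> \<Inter>\<C>" "admissible_type d \<sigma>"
  shows "closed_adm_conic d \<Delta> (\<Inter>\<C>)"
  unfolding closed_adm_conic_def conic_class_def admissible_class_def
proof (intro conjI ballI allI)
  show "\<Inter>\<C> \<noteq> {}" "\<exists>\<sigma>\<in>\<Inter>\<C>. admissible_type d \<sigma>" using \<sigma> by blast+
  have "\<sigma> \<noteq> tbar d \<Delta> 0" using \<sigma>(2) gamma_nonneg unfolding admissible_type_def by auto
  then show "\<Inter>\<C> \<noteq> {tbar d \<Delta> 0}" using \<sigma>(1) by blast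
  obtain D where D: "D \<in> \<C>" using ne by blast
  then show "\<Inter>\<C> \<subseteq> sym_types d \<Delta>"
    using \<C>[OF D] unfolding closed_adm_conic_def conic_class_def by blast
  show "closedin (top_of_set (types d \<Delta>)) (\<Inter>\<C>)"
    using ne \<C> by (intro closedin_Inter) (auto simp: closed_adm_conic_def)
  show "dil d \<Delta> q \<tau> \<in> \<Inter>\<C>" if "\<tau> \<in> \<Inter>\<C>" for q \<tau>
    using that \<C> closed_adm_conic_dil by blast
  show "conv d \<Delta> \<tau> \<rho> \<in> \<Inter>\<C>" if "\<tau> \<in> \<Inter>\<C>" "\<rho> \<in> \<Inter>\<C>" for \<tau> \<rho>
    using that \<C> closed_adm_conic_conv by blast
qed

lemma closed_adm_conic_chain_Inter:
  assumes ne: "\<C> \<noteq> {}" and chain: "subset.chain {D. closed_adm_conic d \<Delta> D} \<C>"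
  shows "closed_adm_conic d \<Delta> (\<Inter>\<C>)"
proof -
  define a where "a = gamma d + 1"
  define K where "K = types d \<Delta> \<inter> {g. a \<le> g (1, 0) \<and> g (1, 0) \<le> 2 * a}"
  have \<C>: "\<And>D. D \<in> \<C> \<Longrightarrow> closed_adm_conic d \<Delta> D" using chain by (auto simp: subset.chain_def)
  have meets: "D \<inter> K \<noteq> {}" if D: "D \<in> \<C>" for D
  proof -
    have "gamma d < a" unfolding a_def by simp
    then obtain \<tau> where "\<tau> \<in> D" "a \<le> \<tau> (1, 0)" "\<tau> (1, 0) \<le> 2 * a"
      using closed_adm_conic_meets_band[OF \<C>[OF D]] by blast
    then show ?thesis using closed_adm_conic_subset_types[OF \<C>[OF D]] by (auto simp: K_def)
  qed
  have "K \<inter> \<Inter>\<C> \<noteq> {}"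
  proof (rule compact_imp_fip)
    show "compact K" unfolding K_def by (rule compact_types_band)
    show "closed D" if "D \<in> \<C>" for D using closed_adm_conic_closed[OF \<C>[OF that]] .
    fix \<F> assume \<F>: "finite \<F>" "\<F> \<subseteq> \<C>"
    show "K \<inter> \<Inter>\<F> \<noteq> {}"
    proof (cases "\<F> = {}")
      case True
      then show ?thesis using meets ne by auto
    next
      case False
      have "subset.chain {D. closed_adm_conic d \<Delta> D} \<F>"
        using chain \<F>(2) unfolding subset.chain_def by blast
      then have "\<Inter>\<F> \<in> \<F>" using Inter_in_chain \<F>(1) False by blast
      then show ?thesis using meets \<F>(2) by blast
    qed
  qed
  then obtain \<sigma> where "\<sigma> \<in> \<Inter>\<C>" "\<sigma> \<in> K" by blast
  moreover from this have "admissible_type d \<sigma>"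
    unfolding K_def admissible_type_def a_def by simp
  ultimately show ?thesis using closed_adm_conic_Inter[OF ne \<C>] by blast
qed

end

theorem proposition5p3:
  fixes d :: "'a::banach \<Rightarrow> 'a \<Rightarrow> real" and \<Delta> :: "'a set"
    and C :: "(rat \<times> 'a \<Rightarrow> real) set"
  assumes "separable_nv TYPE('a)" and "infinite_dimensional TYPE('a)"
    and "pseudometric d" and "translation_invariant d" and "stable_pm d"
    and "coarse_equiv_id d"
    and "rat_dense_subspace \<Delta>"
    and "closed_adm_conic d \<Delta> C"
  shows "\<exists>D \<subseteq> C. closed_adm_conic d \<Delta> D
           \<and> (\<forall>E. closed_adm_conic d \<Delta> E \<and> E \<subseteq> D \<longrightarrow> E = D)"
proof -
  interpret coarse_types_setting d \<Delta>
    using assms by (simp add: coarse_types_setting_def)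
  define \<A> where "\<A> = {D. D \<subseteq> C \<and> closed_adm_conic d \<Delta> D}"
  have "\<exists>M\<in>\<A>. \<forall>E\<in>\<A>. E \<subseteq> M \<longrightarrow> E = M"
  proof (rule Inter_Zorn)
    show "\<A> \<noteq> {}" using assms(8) unfolding \<A>_def by blast
    fix \<C> assume ne: "\<C> \<noteq> {}" and chain: "subset.chain \<A> \<C>"
    then have "subset.chain {D. closed_adm_conic d \<Delta> D} \<C>"
      unfolding subset.chain_def \<A>_def by blast
    then have "closed_adm_conic d \<Delta> (\<Inter>\<C>)" by (rule closed_adm_conic_chain_Inter[OF ne])
    moreover have "\<Inter>\<C> \<subseteq> C" using ne chain unfolding subset.chain_def \<A>_def by blast
    ultimately show "\<Inter>\<C> \<in> \<A>" unfolding \<A>_def by blast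
  qed
  then obtain D where D: "D \<in> \<A>" and minimal: "\<forall>E\<in>\<A>. E \<subseteq> D \<longrightarrow> E = D" ..
  have "E = D" if "closed_adm_conic d \<Delta> E" "E \<subseteq> D" for E
    using minimal that D unfolding \<A>_def by blast
  then show ?thesis using D unfolding \<A>_def by blast
qed

end
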